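(* Suppose the zero-padding range is chosen so that $X[m,n]=0$ for $m<m_{\min}$ and $m>m_{\max}$ (i.e., $X[m,n]\neq 0$ only for $m_{\min}\le m\le m_{\max}$), where \[ m_{\min}\geq\Big\lceil Q-l_{\min}-1+b_{\max}\big((N-1)M-1\big)\Big\rceil,\qquad m_{\max}\leq\Big\lfloor M-Q-l_{\max}-b_{\max}(N-1)M\Big\rfloor . \] Then the delay-Doppler domain input-output relation simplifies to \[ Y[m,n]=\sum_{l=0}^{l_{\max}^{\prime}}\sum_{k=0}^{N-1}X[m-l,(n-k)_{N}]\,G_{l}(m,k), \] where \[ G_{l}(m,k)=\sum_{i=1}^{P}h_{i}\,e^{j2\pi\frac{k_{i}m}{NM}}\frac{1}{N}\sum_{\dot{n}=0}^{N-1}e^{-j2\pi\frac{\dot{n}(k-k_{i})}{N}}\,a\Big(\big(l-l_{i}+b_{i}(m+\dot{n}M)\big)T_{s}\Big). \]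
   Context: Consider a zero-padded (ZP) wideband ODDM system with $M$ multicarrier symbols and $N$ subcarriers per symbol, sampling period (delay resolution) $T_s$ and $T=MT_s$. Data $X[m,n]$ ($m=0,\dots,M-1$, $n=0,\dots,N-1$) is mapped by the normalized $N$-point IFFT $x[m,\dot n]=\frac{1}{\sqrt N}\sum_{n=0}^{N-1}X[m,n]e^{j2\pi n\dot n/N}$, and the transmit waveform is $s(t)=\sum_{m=0}^{M-1}\sum_{\dot n=0}^{N-1}x[m,\dot n]\,a(t-mT_s-\dot nT)$, where $a(t)$ is a truncated Nyquist pulse for symbol interval $T_s$ with $a(t)=0$ for $|t|\ge QT_s$ and $2Q\ll M$. The channel has $P$ paths; the baseband received signal is $r(t)=\sum_{i=1}^{P}h_i e^{j2\pi\nu_i t}s\big(t-(\tau_i-b_it)\big)$ with complex gain $h_i$, delay $\tau_i=l_iT_s$, Doppler shift at the carrier $\nu_i=\frac{k_i}{NMT_s}$ ($l_i,k_i$ possibly non-integer), and Doppler scaling factor $b_i=\text{v}_i/c$ (path-length decrease speed over wave speed), with $|b_i|\le b_{\max}<1$ and $l_{\min}\le l_i\le l_{\max}$ ($l_{\min},l_{\max}$ integers). The receiver samples $y[m,\dot n]=r(mT_s+\dot nT)$ and computes $Y[m,n]=\frac{1}{\sqrt N}\sum_{\dot n=0}^{N-1}y[m,\dot n]e^{-j2\pi n\dot n/N}$. Synchronization is chosen so that the minimum equivalent delay tap is $0$, namely $l_{\min}=Q+\lfloor b_{\max}(NM-1)\rfloor$, and the maximum equivalent tap $l_{\max}^{\prime}=\lfloor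 l_{\max}+Q+b_{\max}(NM-1)\rfloor$ is assumed to satisfy $l_{\max}^{\prime}<M$. Noise is ignored. $(\cdot)_N$ denotes modulo $N$. *)

theory Defs
  imports Complex_Main
begin

definition oddm_x :: "nat \<Rightarrow> (nat \<Rightarrow> nat \<Rightarrow> complex) \<Rightarrow> nat \<Rightarrow> nat \<Rightarrow> complex" where
  "oddm_x N X m nd = (1 / of_real (sqrt (real N))) *
     (\<Sum>n<N. X m n * exp (\<i> * of_real (2 * pi * real n * real nd / real N)))"

text \<open>Transmit waveform s(t), with T = M Ts.\<close>
definition oddm_s :: "nat \<Rightarrow> nat \<Rightarrow> real \<Rightarrow> (real \<Rightarrow> complex) \<Rightarrow> (nat \<Rightarrow> nat \<Rightarrow> complex) \<Rightarrow> real \<Rightarrow> complex" where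
  "oddm_s M N Ts a X t = (\<Sum>m<M. \<Sum>nd<N.
     oddm_x N X m nd * a (t - real m * Ts - real nd * (real M * Ts)))"

text \<open>Received signal r(t) for P paths (indexed 0..P-1): gain h i, delay tau_i = l i * Ts,
  Doppler nu_i = k i / (N M Ts), Doppler scaling factor b i.\<close>
definition oddm_r :: "nat \<Rightarrow> nat \<Rightarrow> real \<Rightarrow> (real \<Rightarrow> complex) \<Rightarrow> (nat \<Rightarrow> nat \<Rightarrow> complex) \<Rightarrow>
    nat \<Rightarrow> (nat \<Rightarrow> complex) \<Rightarrow> (nat \<Rightarrow> real) \<Rightarrow> (nat \<Rightarrow> real) \<Rightarrow> (nat \<Rightarrow> real) \<Rightarrow> real \<Rightarrow> complex" where
  "oddm_r M N Ts a X P h l k b t = (\<Sum>i<P. h i *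
     exp (\<i> * of_real (2 * pi * (k i / (real N * real M * Ts)) * t)) *
     oddm_s M N Ts a X (t - (l i * Ts - b i * t)))"

definition oddm_Y :: "nat \<Rightarrow> nat \<Rightarrow> real \<Rightarrow> (real \<Rightarrow> complex) \<Rightarrow> (nat \<Rightarrow> nat \<Rightarrow> complex) \<Rightarrow>
    nat \<Rightarrow> (nat \<Rightarrow> complex) \<Rightarrow> (nat \<Rightarrow> real) \<Rightarrow> (nat \<Rightarrow> real) \<Rightarrow> (nat \<Rightarrow> real) \<Rightarrow> nat \<Rightarrow> nat \<Rightarrow> complex" where
  "oddm_Y M N Ts a X P h l k b m n = (1 / of_real (sqrt (real N))) *
     (\<Sum>nd<N. oddm_r M N Ts a X P h l k b (real m * Ts + real nd * (real M * Ts)) *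
        exp (- \<i> * of_real (2 * pi * real n * real nd / real N)))"

definition Xz :: "nat \<Rightarrow> (nat \<Rightarrow> nat \<Rightarrow> complex) \<Rightarrow> int \<Rightarrow> nat \<Rightarrow> complex" where
  "Xz M X i n = (if 0 \<le> i \<and> i < int M then X (nat i) n else 0)"

definition oddm_G :: "nat \<Rightarrow> nat \<Rightarrow> real \<Rightarrow> (real \<Rightarrow> complex) \<Rightarrow>
    nat \<Rightarrow> (nat \<Rightarrow> complex) \<Rightarrow> (nat \<Rightarrow> real) \<Rightarrow> (nat \<Rightarrow> real) \<Rightarrow> (nat \<Rightarrow> real) \<Rightarrow> nat \<Rightarrow> nat \<Rightarrow> nat \<Rightarrow> complex" where
  "oddm_G M N Ts a P h l k b ll m kk = (\<Sum>i<P. h i *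
     exp (\<i> * of_real (2 * pi * k i * real m / (real N * real M))) *
     (1 / of_nat N) *
     (\<Sum>nd<N. exp (- \<i> * of_real (2 * pi * real nd * (real kk - k i) / real N)) *
        a ((real ll - l i + b i * (real m + real nd * real M)) * Ts)))"

end

theory Submission
  imports Defs
begin

(*
  At the sample time t = (m + nd M) Ts, path i sees the transmitted sample x[m', nd'] through the
  pulse a at the offset (m - m' + (nd - nd') M - l_i + b_i (m + nd M)) Ts.  The zero-padding range
  makes this offset at least Q in absolute value whenever nd' \<noteq> nd, so every path sample only
  involves the multicarrier symbol nd; the synchronization condition likewise kills every m'
  outside m - l'_max \<le> m' \<le> m.  Applying the DFT over nd then turns the Doppler phase
  exp(j 2 pi k_i (m + nd M) / (N M)) into a circular convolution in the Doppler index with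
  kernel G_l(m, k), because exp(j 2 pi nd k / N) depends on k only modulo N.
*)

lemma cis_2pi_mod:
  fixes d j :: int and N :: nat
  assumes "0 < N"
  shows "cis (2 * pi * of_int d * of_int (j mod int N) / real N) = cis (2 * pi * of_int d * of_int j / real N)"
proof -
  have "2 * pi * of_int d * of_int (j mod int N) / real N
      = 2 * pi * of_int d * of_int j / real N + 2 * pi * of_int (- d * (j div int N))"
    using assms by (simp add: minus_div_mult_eq_mod[symmetric] field_simps)
  then have "cis (2 * pi * of_int d * of_int (j mod int N) / real N)
      = cis (2 * pi * of_int d * of_int j / real N) * cis (2 * pi * of_int (- d * (j div int N)))"
    by (simp only: cis_mult)
  also have "cis (2 * pi * of_int (- d * (j div int N))) = 1"
    by (rule cis_multiple_2pi) simp
  finally show ?thesis by simp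
qed

lemma sum_reindex_diff_mod:
  fixes N n :: nat
  assumes "0 < N"
  shows "(\<Sum>kk<N. f (nat ((int n - int kk) mod int N)) kk) = (\<Sum>n'<N. f n' (nat ((int n - int n') mod int N)))"
  by (rule sum.reindex_bij_witness[where i = "\<lambda>n'. nat ((int n - int n') mod int N)"
        and j = "\<lambda>kk. nat ((int n - int kk) mod int N)"])
     (use assms in \<open>auto simp: mod_diff_right_eq nat_less_iff\<close>)

lemma oddm_phase_eq:
  fixes N M m n n' nd :: nat and Ts ki :: real
  assumes "0 < N" "0 < M" "Ts \<noteq> 0"
  shows "exp (\<i> * of_real (2 * pi * (ki / (real N * real M * Ts)) * (real m * Ts + real nd * (real M * Ts))))
       * exp (\<i> * of_real (2 * pi * real n' * real nd / real N))
       * exp (- \<i> * of_real (2 * pi * real n * real nd / real N))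
     = exp (\<i> * of_real (2 * pi * ki * real m / (real N * real M)))
       * exp (- \<i> * of_real (2 * pi * real nd * (real (nat ((int n - int n') mod int N)) - ki) / real N))"
    (is "?lhs = ?rhs")
proof -
  have cis_exp: "exp (\<i> * of_real x) = cis x" "exp (- \<i> * of_real x) = cis (- x)" for x
    by (simp_all add: cis_conv_exp)
  define \<alpha> where "\<alpha> = 2 * pi * ki * real m / (real N * real M) + 2 * pi * ki * real nd / real N"
  have wrap: "cis (2 * pi * of_int (- int nd) * of_int ((int n - int n') mod int N) / real N)
      = cis (2 * pi * of_int (- int nd) * of_int (int n - int n') / real N)"
    using assms(1) by (rule cis_2pi_mod)
  have "?lhs = cis \<alpha> * cis (2 * pi * of_int (- int nd) * of_int (int n - int n') / real N)"
    unfolding cis_exp cis_mult using assms by (intro arg_cong[where f = cis]) (simp add: \<alpha>_def field_simps)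
  also have "\<dots> = ?rhs"
    unfolding wrap[symmetric] cis_exp cis_mult using assms
    by (intro arg_cong[where f = cis]) (simp add: \<alpha>_def field_simps)
  finally show ?thesis .
qed

lemma sum_swap_nested4:
  "(\<Sum>a\<in>A. \<Sum>b\<in>B. \<Sum>c\<in>C. \<Sum>d\<in>D. f a b c d) = (\<Sum>c\<in>C. \<Sum>d\<in>D. \<Sum>b\<in>B. \<Sum>a\<in>A. f a b c d)"
proof -
  have "(\<Sum>a\<in>A. \<Sum>b\<in>B. \<Sum>c\<in>C. \<Sum>d\<in>D. f a b c d) = (\<Sum>c\<in>C. \<Sum>a\<in>A. \<Sum>b\<in>B. \<Sum>d\<in>D. f a b c d)"
    by (simp only: sum.swap[of _ B C] sum.swap[of _ A C])
  also have "\<dots> = (\<Sum>c\<in>C. \<Sum>d\<in>D. \<Sum>b\<in>B. \<Sum>a\<in>A. f a b c d)"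
    by (simp only: sum.swap[of _ B D] sum.swap[of _ A D] sum.swap[of _ A B])
  finally show ?thesis .
qed

lemma sum_taps_eq_sum_symbols:
  fixes F :: "nat \<Rightarrow> nat \<Rightarrow> complex"
  assumes "m < M" "0 < N"
  shows "(\<Sum>ll\<in>{0..L}. \<Sum>kk<N. Xz M X (int m - int ll) (nat ((int n - int kk) mod int N)) * F ll kk)
       = (\<Sum>m'\<in>{m'. m' \<le> m \<and> m - m' \<le> L}. \<Sum>n'<N. X m' n' * F (m - m') (nat ((int n - int n') mod int N)))"
proof -
  define g where "g ll = (\<Sum>kk<N. X (m - ll) (nat ((int n - int kk) mod int N)) * F ll kk)" for ll
  have "(\<Sum>kk<N. Xz M X (int m - int ll) (nat ((int n - int kk) mod int N)) * F ll kk)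
      = (if ll \<le> m then g ll else 0)" for ll
    using assms(1) by (simp add: Xz_def g_def of_nat_diff nat_diff_distrib)
  then have "(\<Sum>ll\<in>{0..L}. \<Sum>kk<N. Xz M X (int m - int ll) (nat ((int n - int kk) mod int N)) * F ll kk)
      = (\<Sum>ll\<in>{ll\<in>{0..L}. ll \<le> m}. g ll)"
    using sum.inter_filter[of "{0..L}" g "\<lambda>ll. ll \<le> m"] by simp
  also have "\<dots> = (\<Sum>m'\<in>{m'. m' \<le> m \<and> m - m' \<le> L}. g (m - m'))"
    by (rule sum.reindex_bij_witness[where i = "\<lambda>m'. m - m'" and j = "\<lambda>ll. m - ll"]) auto
  also have "\<dots> = (\<Sum>m'\<in>{m'. m' \<le> m \<and> m - m' \<le> L}. \<Sum>n'<N. X m' n' * F (m - m') (nat ((int n - int n') mod int N)))"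
  proof (intro sum.cong refl)
    fix m' assume "m' \<in> {m'. m' \<le> m \<and> m - m' \<le> L}"
    then show "g (m - m') = (\<Sum>n'<N. X m' n' * F (m - m') (nat ((int n - int n') mod int N)))"
      unfolding g_def using sum_reindex_diff_mod[OF assms(2), of "\<lambda>n' kk. X m' n' * F (m - m') kk"] by simp
  qed
  finally show ?thesis .
qed

lemma abs_offset_ge_Q_cross_symbol:
  fixes M N Q m m' nd nd' :: nat and bmax bi li :: real and lmin lmax mmin mmax :: int
  assumes bmax: "0 \<le> bmax" "bmax \<le> 1" "\<bar>bi\<bar> \<le> bmax"
    and li: "lmin \<le> li" "li \<le> lmax"
    and idx: "m < M" "nd < N" "nd' < N" "nd' \<noteq> nd"
    and m': "mmin \<le> int m'" "int m' \<le> mmax"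
    and mmin: "real_of_int mmin \<ge> real Q - lmin - 1 + bmax * ((real N - 1) * real M - 1)"
    and mmax: "real_of_int mmax \<le> real M - real Q - lmax - bmax * ((real N - 1) * real M)"
  shows "real Q \<le> \<bar>real m - real m' + (real nd - real nd') * real M - li + bi * (real m + real nd * real M)\<bar>"
proof -
  define y where "y = real m + real nd * real M"
  have "\<bar>bi * y\<bar> \<le> bmax * y"
    unfolding abs_mult y_def using bmax(3) by (simp add: mult_right_mono)
  then have beta: "- (bmax * y) \<le> bi * y" "bi * y \<le> bmax * y" by linarith+
  have m'_real: "real_of_int mmin \<le> real m'" "real m' \<le> real_of_int mmax"
    using m' by linarith+
  consider "nd' < nd" | "nd < nd'" using idx(4) by linarith
  then show ?thesis
  proof cases
    case 1
    have "real M \<le> (real nd - real nd') * real M"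
      using 1 mult_right_mono[of 1 "real nd - real nd'" "real M"] by simp
    moreover have "bmax * y \<le> real m + bmax * ((real N - 1) * real M)"
    proof -
      have "real nd * real M \<le> (real N - 1) * real M"
        using idx(2) by (intro mult_right_mono) auto
      then have "bmax * y \<le> bmax * (real m + (real N - 1) * real M)"
        unfolding y_def using bmax(1) by (intro mult_left_mono) auto
      moreover have "bmax * real m \<le> real m"
        using bmax(1,2) by (simp add: mult_left_le_one_le)
      ultimately show ?thesis by (simp add: distrib_left)
    qed
    ultimately show ?thesis
      using beta m'_real mmax li unfolding y_def by linarith
  next
    case 2
    have "(real nd - real nd') * real M \<le> - real M"
      using 2 by (intro mult_right_mono[where a = "real nd - real nd'" and b = "-1", simplified]) auto
    moreover have "bmax * y + bmax \<le> bmax * ((real N - 1) * real M)"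
    proof -
      have "(real nd + 1) * real M \<le> (real N - 1) * real M"
        using 2 idx(3) by (intro mult_right_mono) auto
      then have "y + 1 \<le> (real N - 1) * real M"
        unfolding y_def using idx(1) by (simp add: algebra_simps)
      then show ?thesis
        using bmax(1) by (metis distrib_left mult.right_neutral mult_left_mono)
    qed
    ultimately show ?thesis
      using beta m'_real mmin li idx(1) unfolding y_def by (simp add: right_diff_distrib)
  qed
qed

lemma abs_offset_ge_Q_outside_taps:
  fixes M N Q m m' nd :: nat and bmax bi li :: real and lmin lmax :: int
  assumes bmax: "0 \<le> bmax" "\<bar>bi\<bar> \<le> bmax"
    and li: "lmin \<le> li" "li \<le> lmax"
    and idx: "m < M" "nd < N"
    and sync: "lmin = int Q + \<lfloor>bmax * (real N * real M - 1)\<rfloor>"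
    and outside: "\<not> (m' \<le> m \<and> m - m' \<le> nat \<lfloor>real_of_int lmax + real Q + bmax * (real N * real M - 1)\<rfloor>)"
  shows "real Q \<le> \<bar>real m - real m' - li + bi * (real m + real nd * real M)\<bar>"
proof -
  define y where "y = real m + real nd * real M"
  have "\<bar>bi * y\<bar> \<le> bmax * y"
    unfolding abs_mult y_def using bmax(2) by (simp add: mult_right_mono)
  moreover have "bmax * y \<le> bmax * (real N * real M - 1)"
  proof -
    have "real nd * real M \<le> (real N - 1) * real M"
      using idx(2) by (intro mult_right_mono) auto
    then show ?thesis
      unfolding y_def using idx(1) bmax(1) by (intro mult_left_mono) (auto simp: algebra_simps)
  qed
  ultimately have beta: "\<bar>bi * y\<bar> \<le> bmax * (real N * real M - 1)" by linarith
  consider "m < m'" | "m' \<le> m" "nat \<lfloor>real_of_int lmax + real Q + bmax * (real N * real M - 1)\<rfloor> < m - m'"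
    using outside by linarith
  then show ?thesis
  proof cases
    case 1
    then show ?thesis
      using beta sync li real_of_int_floor_gt_diff_one[of "bmax * (real N * real M - 1)"]
      unfolding y_def by linarith
  next
    case 2
    then have "real_of_int lmax + real Q + bmax * (real N * real M - 1) < real m - real m'"
      by linarith
    then show ?thesis
      using beta li unfolding y_def by linarith
  qed
qed

lemma pulse_vanishes:
  fixes Q :: nat and Ts :: real and a :: "real \<Rightarrow> complex"
  assumes "0 < Ts" and a_supp: "\<And>t. \<bar>t\<bar> \<ge> real Q * Ts \<Longrightarrow> a t = 0" and "real Q \<le> \<bar>u\<bar>"
  shows "a (u * Ts) = 0"
  using assms by (intro a_supp) (simp add: abs_mult mult_right_mono)

lemma oddm_s_single_symbol:
  assumes "nd < N"
    and no_isi: "\<And>m' nd'. m' < M \<Longrightarrow> nd' < N \<Longrightarrow> nd' \<noteq> nd \<Longrightarrow>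
      oddm_x N X m' nd' * a (t - real m' * Ts - real nd' * (real M * Ts)) = 0"
  shows "oddm_s M N Ts a X t = (\<Sum>m'<M. oddm_x N X m' nd * a (t - real m' * Ts - real nd * (real M * Ts)))"
  unfolding oddm_s_def
proof (intro sum.cong refl)
  fix m' assume "m' \<in> {..<M}"
  then have "(\<Sum>nd'<N. oddm_x N X m' nd' * a (t - real m' * Ts - real nd' * (real M * Ts)))
      = (\<Sum>nd'\<in>{nd}. oddm_x N X m' nd' * a (t - real m' * Ts - real nd' * (real M * Ts)))"
    using assms by (intro sum.mono_neutral_right) auto
  then show "(\<Sum>nd'<N. oddm_x N X m' nd' * a (t - real m' * Ts - real nd' * (real M * Ts)))
      = oddm_x N X m' nd * a (t - real m' * Ts - real nd * (real M * Ts))"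
    by simp
qed

lemma oddm_s_path_sample_isi_free:
  fixes M N Q m nd :: nat and Ts bmax bi li :: real and lmin lmax mmin mmax :: int
  assumes Ts: "0 < Ts" and a_supp: "\<And>t. \<bar>t\<bar> \<ge> real Q * Ts \<Longrightarrow> a t = 0"
    and bmax: "0 \<le> bmax" "bmax \<le> 1" "\<bar>bi\<bar> \<le> bmax"
    and li: "lmin \<le> li" "li \<le> lmax"
    and idx: "m < M" "nd < N"
    and mmin: "real_of_int mmin \<ge> real Q - lmin - 1 + bmax * ((real N - 1) * real M - 1)"
    and mmax: "real_of_int mmax \<le> real M - real Q - lmax - bmax * ((real N - 1) * real M)"
    and ZP: "\<And>m' n. m' < M \<Longrightarrow> n < N \<Longrightarrow> (int m' < mmin \<or> int m' > mmax) \<Longrightarrow> X m' n = 0"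
  shows "oddm_s M N Ts a X (real m * Ts + real nd * (real M * Ts) - (li * Ts - bi * (real m * Ts + real nd * (real M * Ts))))
    = (\<Sum>m'<M. oddm_x N X m' nd * a ((real m - real m' - li + bi * (real m + real nd * real M)) * Ts))"
proof -
  have arg: "real m * Ts + real nd * (real M * Ts) - (li * Ts - bi * (real m * Ts + real nd * (real M * Ts)))
      - real m' * Ts - real nd' * (real M * Ts)
    = (real m - real m' + (real nd - real nd') * real M - li + bi * (real m + real nd * real M)) * Ts" for m' nd'
    by (simp add: algebra_simps)
  have no_isi: "oddm_x N X m' nd' * a (real m * Ts + real nd * (real M * Ts)
      - (li * Ts - bi * (real m * Ts + real nd * (real M * Ts))) - real m' * Ts - real nd' * (real M * Ts)) = 0"
    if m': "m' < M" and nd': "nd' < N" "nd' \<noteq> nd" for m' nd'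
  proof (cases "mmin \<le> int m' \<and> int m' \<le> mmax")
    case True
    then have "real Q \<le> \<bar>real m - real m' + (real nd - real nd') * real M - li + bi * (real m + real nd * real M)\<bar>"
      using abs_offset_ge_Q_cross_symbol[OF bmax li idx nd' _ _ mmin mmax] by blast
    then show ?thesis
      unfolding arg by (simp add: pulse_vanishes[where Q = Q and a = a, OF Ts a_supp])
  next
    case False
    then have "X m' n' = 0" if "n' < N" for n'
      using m' that by (auto intro: ZP)
    then show ?thesis by (simp add: oddm_x_def)
  qed
  show ?thesis
    using oddm_s_single_symbol[OF idx(2) no_isi] by (simp add: arg)
qed

definition oddm_kernel :: "nat \<Rightarrow> nat \<Rightarrow> nat \<Rightarrow> (nat \<Rightarrow> complex) \<Rightarrow> (nat \<Rightarrow> real) \<Rightarrow>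
    (nat \<Rightarrow> nat \<Rightarrow> complex) \<Rightarrow> nat \<Rightarrow> nat \<Rightarrow> complex" where
  "oddm_kernel M N P h k p m kk = (\<Sum>i<P. h i *
     exp (\<i> * of_real (2 * pi * k i * real m / (real N * real M))) * (1 / of_nat N) *
     (\<Sum>nd<N. exp (- \<i> * of_real (2 * pi * real nd * (real kk - k i) / real N)) * p i nd))"

lemma oddm_G_eq_kernel:
  "oddm_G M N Ts a P h l k b ll m kk =
    oddm_kernel M N P h k (\<lambda>i nd. a ((real ll - l i + b i * (real m + real nd * real M)) * Ts)) m kk"
  by (simp add: oddm_G_def oddm_kernel_def)

lemma oddm_Y_eq_kernel_sum:
  fixes p :: "nat \<Rightarrow> nat \<Rightarrow> nat \<Rightarrow> complex"
  assumes "0 < N" "0 < M" "Ts \<noteq> 0"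
    and paths: "\<And>i nd. i < P \<Longrightarrow> nd < N \<Longrightarrow>
      oddm_s M N Ts a X (real m * Ts + real nd * (real M * Ts) - (l i * Ts - b i * (real m * Ts + real nd * (real M * Ts))))
        = (\<Sum>m'<M. oddm_x N X m' nd * p m' i nd)"
  shows "oddm_Y M N Ts a X P h l k b m n =
    (\<Sum>m'<M. \<Sum>n'<N. X m' n' * oddm_kernel M N P h k (p m') m (nat ((int n - int n') mod int N)))"
    (is "_ = ?rhs")
proof -
  define c :: complex where "c = 1 / of_real (sqrt (real N))"
  have "of_real (sqrt (real N)) * of_real (sqrt (real N)) = (of_nat N :: complex)"
    by (simp flip: of_real_mult)
  then have cc: "c * c = 1 / of_nat N"
    by (simp add: c_def)
  have summand: "c * (h i * exp (\<i> * of_real (2 * pi * (k i / (real N * real M * Ts)) * (real m * Ts + real nd * (real M * Ts)))) *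
        ((c * (X m' n' * exp (\<i> * of_real (2 * pi * real n' * real nd / real N)))) * p m' i nd) *
        exp (- \<i> * of_real (2 * pi * real n * real nd / real N)))
    = X m' n' * (h i * exp (\<i> * of_real (2 * pi * k i * real m / (real N * real M))) * (1 / of_nat N) *
        (exp (- \<i> * of_real (2 * pi * real nd * (real (nat ((int n - int n') mod int N)) - k i) / real N)) * p m' i nd))"
    (is "?l = ?r") for i nd m' n'
  proof -
    let ?E = "exp (\<i> * of_real (2 * pi * (k i / (real N * real M * Ts)) * (real m * Ts + real nd * (real M * Ts))))"
      and ?e' = "exp (\<i> * of_real (2 * pi * real n' * real nd / real N))"
      and ?e = "exp (- \<i> * of_real (2 * pi * real n * real nd / real N))"
    have "?l = (c * c) * (X m' n' * h i * p m' i nd) * (?E * ?e' * ?e)"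
      by (simp only: ac_simps)
    also have "\<dots> = ?r"
      unfolding oddm_phase_eq[OF assms(1-3)] cc by (simp only: ac_simps)
    finally show ?thesis .
  qed
  have "oddm_Y M N Ts a X P h l k b m n = c * (\<Sum>nd<N. (\<Sum>i<P. h i *
      exp (\<i> * of_real (2 * pi * (k i / (real N * real M * Ts)) * (real m * Ts + real nd * (real M * Ts)))) *
      (\<Sum>m'<M. oddm_x N X m' nd * p m' i nd)) * exp (- \<i> * of_real (2 * pi * real n * real nd / real N)))"
    unfolding oddm_Y_def oddm_r_def c_def by (intro arg_cong2[where f = "(*)"] sum.cong refl) (simp add: paths)
  also have "\<dots> = (\<Sum>nd<N. \<Sum>i<P. \<Sum>m'<M. \<Sum>n'<N. X m' n' * (h i *
      exp (\<i> * of_real (2 * pi * k i * real m / (real N * real M))) * (1 / of_nat N) *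
      (exp (- \<i> * of_real (2 * pi * real nd * (real (nat ((int n - int n') mod int N)) - k i) / real N)) * p m' i nd)))"
    unfolding oddm_x_def c_def[symmetric] sum_distrib_left sum_distrib_right summand ..
  also have "\<dots> = ?rhs"
    by (subst sum_swap_nested4) (simp only: sum_distrib_left oddm_kernel_def)
  finally show ?thesis .
qed

theorem theorem2:
  fixes M N Q P :: nat and Ts bmax :: real and a :: "real \<Rightarrow> complex"
    and X :: "nat \<Rightarrow> nat \<Rightarrow> complex" and h :: "nat \<Rightarrow> complex"
    and l k b :: "nat \<Rightarrow> real" and lmin lmax mmin mmax :: int
  assumes M_pos: "0 < M" and N_pos: "0 < N" and Ts_pos: "0 < Ts"
    and QM: "2 * Q < M"
    and a_supp: "\<And>t. \<bar>t\<bar> \<ge> real Q * Ts \<Longrightarrow> a t = 0"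
    and bmax: "0 \<le> bmax" "bmax < 1"
    and b_bound: "\<And>i. i < P \<Longrightarrow> \<bar>b i\<bar> \<le> bmax"
    and l_bound: "\<And>i. i < P \<Longrightarrow> real_of_int lmin \<le> l i \<and> l i \<le> real_of_int lmax"
    and sync: "lmin = int Q + \<lfloor>bmax * (real N * real M - 1)\<rfloor>"
    and lmaxp_lt: "\<lfloor>real_of_int lmax + real Q + bmax * (real N * real M - 1)\<rfloor> < int M"
    and mmin: "real_of_int mmin \<ge> real_of_int \<lceil>real Q - real_of_int lmin - 1 + bmax * ((real N - 1) * real M - 1)\<rceil>"
    and mmax: "real_of_int mmax \<le> real_of_int \<lfloor>real M - real Q - real_of_int lmax - bmax * (real N - 1) * real M\<rfloor>"
    and ZP: "\<And>m n. m < M \<Longrightarrow> n < N \<Longrightarrow> (int m < mmin \<or> int m > mmax) \<Longrightarrow> X m n = 0"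
  shows "\<forall>m<M. \<forall>n<N.
     oddm_Y M N Ts a X P h l k b m n =
     (\<Sum>ll\<in>{0..nat \<lfloor>real_of_int lmax + real Q + bmax * (real N * real M - 1)\<rfloor>}.
        \<Sum>kk<N. Xz M X (int m - int ll) (nat ((int n - int kk) mod int N)) *
                 oddm_G M N Ts a P h l k b ll m kk)"
proof (intro allI impI)
  fix m n assume m: "m < M" and "n < N"
  define L where "L = nat \<lfloor>real_of_int lmax + real Q + bmax * (real N * real M - 1)\<rfloor>"
  define p where "p m' i nd = a ((real m - real m' - l i + b i * (real m + real nd * real M)) * Ts)" for m' i nd
  have mmin': "real_of_int mmin \<ge> real Q - lmin - 1 + bmax * ((real N - 1) * real M - 1)"
    using mmin le_of_int_ceiling order_trans by blast
  have mmax': "real_of_int mmax \<le> real M - real Q - lmax - bmax * ((real N - 1) * real M)"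
    using order_trans[OF mmax of_int_floor_le] by (simp add: mult.assoc)
  have "oddm_Y M N Ts a X P h l k b m n =
      (\<Sum>m'<M. \<Sum>n'<N. X m' n' * oddm_kernel M N P h k (p m') m (nat ((int n - int n') mod int N)))"
    using N_pos M_pos Ts_pos bmax l_bound
    by (intro oddm_Y_eq_kernel_sum)
      (auto simp: p_def intro!: oddm_s_path_sample_isi_free[OF Ts_pos a_supp _ _ b_bound _ _ m _ mmin' mmax' ZP])
  also have "\<dots> = (\<Sum>m'\<in>{m'. m' \<le> m \<and> m - m' \<le> L}. \<Sum>n'<N. X m' n' *
      oddm_G M N Ts a P h l k b (m - m') m (nat ((int n - int n') mod int N)))"
  proof (rule sum.mono_neutral_cong_right)
    have "p m' i nd = 0" if "m' \<notin> {m'. m' \<le> m \<and> m - m' \<le> L}" "i < P" "nd < N" for m' i nd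
      using abs_offset_ge_Q_outside_taps[OF bmax(1) b_bound[OF that(2)] _ _ m that(3) sync] l_bound[OF that(2)] that(1)
      unfolding p_def L_def by (auto intro!: pulse_vanishes[where Q = Q and a = a, OF Ts_pos a_supp])
    then show "\<forall>m'\<in>{..<M} - {m'. m' \<le> m \<and> m - m' \<le> L}.
        (\<Sum>n'<N. X m' n' * oddm_kernel M N P h k (p m') m (nat ((int n - int n') mod int N))) = 0"
      by (simp add: oddm_kernel_def)
  qed (use m in \<open>auto simp: oddm_G_eq_kernel p_def[abs_def] of_nat_diff\<close>)
  also have "\<dots> = (\<Sum>ll\<in>{0..L}. \<Sum>kk<N. Xz M X (int m - int ll) (nat ((int n - int kk) mod int N)) *
      oddm_G M N Ts a P h l k b ll m kk)"
    using m N_pos by (rule sum_taps_eq_sum_symbols[symmetric])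
  finally show "oddm_Y M N Ts a X P h l k b m n = (\<Sum>ll\<in>{0..nat \<lfloor>real_of_int lmax + real Q + bmax * (real N * real M - 1)\<rfloor>}.
      \<Sum>kk<N. Xz M X (int m - int ll) (nat ((int n - int kk) mod int N)) * oddm_G M N Ts a P h l k b ll m kk)"
    unfolding L_def .
qed

end
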